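(* Let $K\ge 1$, $\alpha\in[K]=\{1,\dots,K\}$ and $F\in\mathbb{Z}^+$, and consider the coded caching problem with the symmetric $(K,\alpha,F)$ FDS structure, with $N=F\binom{K}{\alpha}\ge K$ files. Let $R^\star_{\mathrm{u},\mathrm{s}}(M)$ be the optimal worst-case communication load under uncoded and selfish cache placement when each user has a cache of $M$ files. Define $R_{\mathrm{LB}}(M)$ on $[0,\alpha N/K]$ as the piecewise linear function obtained by linear interpolation between the consecutive corner points $$\big(M,R_{\mathrm{LB}}\big)=\left(t\frac{N}{K},\ \frac{\binom{\alpha}{t+1}+(K-\alpha)\binom{\alpha-1}{t}}{\binom{\alpha}{t}}\right),\qquad t\in\{0,1,\dots,\alpha\}.$$ Then $R^\star_{\mathrm{u},\mathrm{s}}(M)\ge R_{\mathrm{LB}}(M)$ for all $M\in[0,\alpha N/K]$. Moreover, at each corner point, writing $\gamma=M/N=t/K$ and $\gamma_\alpha=K\gamma/\alpha$, the corner value equals $$R_{\mathrm{LB}}=\frac{K(1-\gamma_\alpha)}{K\gamma+1}\big[(K-\alpha)\gamma+1\big].$$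
   Context: Notation: $[n]=\{1,\dots,n\}$, $[a:b]=\{a,\dots,b\}$; $\binom{n}{k}=0$ whenever $n<0$, $k<0$ or $n<k$. Symmetric $(K,\alpha,F)$ FDS structure: the library consists of $N=F\binom{K}{\alpha}$ distinct files $W_{f,\mathcal S}$, indexed by $f\in[F]$ and $\mathcal S\subseteq[K]$ with $|\mathcal S|=\alpha$; the file class $\mathcal W_{\mathcal S}=\{W_{f,\mathcal S}:f\in[F]\}$ is of interest exactly to the users in $\mathcal S$. The file demand set (FDS) of user $k\in[K]$ is $\mathcal F_k=\{W_{f,\mathcal S}: f\in[F],\ |\mathcal S|=\alpha,\ k\in\mathcal S\}$. Caching model (centralized): a server stores the $N$ files, each consisting of $B$ independent uniformly random bits, and is connected to $K$ users by an error-free shared broadcast link; each user has a cache of $MB$ bits. In the placement phase the server fills the caches without knowing the future demands. In the delivery phase each user $k$ requests one file $W_{f_k,\mathcal D_k}\in\mathcal F_k$; the server then broadcasts a message, as a function of the library and the demands, from which each user must decode its requested file using its cache contents. A pair $(M,R)$ is achievable if there is a placement and delivery scheme such that, for every admissible demand (each user requesting a file in its own FDS), the number of transmitted bits is at most $RB$. The optimal worst-case load is $\inf\{R:(M,R)\text{ achievable}\}$. Uncoded and selfish placement: the cache of each user consists of plain copies of bits of the files (uncoded), and user $k$ may cache bits of a file $W_{f,\mathcal S}$ only if $W_{f,\mathcal S}\in\mathcal F_k$, i.e. only if $k\in\mathcal S$ (selfish). $R^\star_{\mathrm{u},\mathrm{s}}(M)$ is the optimal worst-case load when the placement is restricted to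 be uncoded and selfish. *)

theory Defs
  imports Complex_Main
begin

type_synonym file_idx = "nat \<times> nat set"
type_synonym library = "file_idx \<Rightarrow> nat \<Rightarrow> bool"  (* W (f,S) b = b-th bit of W_{f,S} *)
type_synonym cache_content = "file_idx \<times> nat \<Rightarrow> bool"

definition users :: "nat \<Rightarrow> nat set" where
  "users K = {1..K}"

definition files :: "nat \<Rightarrow> nat \<Rightarrow> nat \<Rightarrow> file_idx set" where
  "files K \<alpha> F = {(f, S). f \<in> {1..F} \<and> S \<subseteq> {1..K} \<and> card S = \<alpha>}"

definition FDS :: "nat \<Rightarrow> nat \<Rightarrow> nat \<Rightarrow> nat \<Rightarrow> file_idx set" where
  "FDS K \<alpha> F k = {i \<in> files K \<alpha> F. k \<in> snd i}"

definition libraries :: "nat \<Rightarrow> nat \<Rightarrow> nat \<Rightarrow> nat \<Rightarrow> library set" where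
  "libraries K \<alpha> F B = {W. \<forall>i b. (i \<notin> files K \<alpha> F \<or> B \<le> b) \<longrightarrow> W i b = False}"

definition cache_of :: "(file_idx \<times> nat) set \<Rightarrow> library \<Rightarrow> cache_content" where
  "cache_of Z W = (\<lambda>p. if p \<in> Z then W (fst p) (snd p) else False)"

definition us_placement :: "nat \<Rightarrow> nat \<Rightarrow> nat \<Rightarrow> nat \<Rightarrow> real \<Rightarrow> nat \<Rightarrow> (file_idx \<times> nat) set \<Rightarrow> bool" where
  "us_placement K \<alpha> F B M k Z \<longleftrightarrow>
     Z \<subseteq> {(i, b). i \<in> FDS K \<alpha> F k \<and> b < B} \<and> real (card Z) \<le> M * real B"

definition demands :: "nat \<Rightarrow> nat \<Rightarrow> nat \<Rightarrow> (nat \<Rightarrow> file_idx) set" where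
  "demands K \<alpha> F = {d. \<forall>k \<in> users K. d k \<in> FDS K \<alpha> F k}"

definition achievable_us :: "nat \<Rightarrow> nat \<Rightarrow> nat \<Rightarrow> real \<Rightarrow> real \<Rightarrow> bool" where
  "achievable_us K \<alpha> F M R \<longleftrightarrow>
     (\<exists>B::nat. B > 0 \<and>
       (\<exists>Z :: nat \<Rightarrow> (file_idx \<times> nat) set.
          (\<forall>k \<in> users K. us_placement K \<alpha> F B M k (Z k)) \<and>
          (\<forall>d \<in> demands K \<alpha> F.
             \<exists>(enc :: library \<Rightarrow> bool list)
              (dec :: nat \<Rightarrow> bool list \<Rightarrow> cache_content \<Rightarrow> nat \<Rightarrow> bool).
               \<forall>W \<in> libraries K \<alpha> F B.
                 real (length (enc W)) \<le> R * real B \<and>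
                 (\<forall>k \<in> users K. \<forall>b < B. dec k (enc W) (cache_of (Z k) W) b = W (d k) b))))"

definition R_opt_us :: "nat \<Rightarrow> nat \<Rightarrow> nat \<Rightarrow> real \<Rightarrow> real" where
  "R_opt_us K \<alpha> F M = Inf {R. achievable_us K \<alpha> F M R}"

definition num_files :: "nat \<Rightarrow> nat \<Rightarrow> nat \<Rightarrow> nat" where
  "num_files K \<alpha> F = F * (K choose \<alpha>)"

definition corner_M :: "nat \<Rightarrow> nat \<Rightarrow> nat \<Rightarrow> nat \<Rightarrow> real" where
  "corner_M K \<alpha> F t = real t * real (num_files K \<alpha> F) / real K"

definition corner_R :: "nat \<Rightarrow> nat \<Rightarrow> nat \<Rightarrow> real" where
  "corner_R K \<alpha> t =
     (real (\<alpha> choose (t + 1)) + real (K - \<alpha>) * real ((\<alpha> - 1) choose t)) / real (\<alpha> choose t)"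

definition R_LB :: "nat \<Rightarrow> nat \<Rightarrow> nat \<Rightarrow> real \<Rightarrow> real" where
  "R_LB K \<alpha> F M =
     (let t = min (\<alpha> - 1) (nat \<lfloor>M * real K / real (num_files K \<alpha> F)\<rfloor>);
          M0 = corner_M K \<alpha> F t; M1 = corner_M K \<alpha> F (t + 1);
          lam = (M - M0) / (M1 - M0)
      in (1 - lam) * corner_R K \<alpha> t + lam * corner_R K \<alpha> (t + 1))"

end

theory Submission
  imports Defs "HOL-Combinatorics.Permutations"
begin

text \<open>Fix a placement and a delivery scheme of load R. For a permutation \<pi> of the users and a
  shift c of the file indices, let user \<pi> j request a file of the class \<pi> ` W_j, where W_j is
  the cyclic window of \<alpha> users starting at j. Every user of the chain \<pi> 1, ..., \<pi> K decodes its
  file from the broadcast and its cache, so the broadcast determines all bits of these files that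
  no earlier user of the chain has cached; there are at most R B of them. Summing over all \<pi> and
  c, a bit cached by exactly u users is counted with a weight proportional to the corner value at
  u. Since the corner values are convex in u and the cache sizes bound the total number of cached
  copies by K M B, Jensen's inequality along the chord through the neighbouring corner points
  gives R \<ge> R_LB(M).\<close>

section \<open>Corner values\<close>

definition corner_fun :: "nat \<Rightarrow> nat \<Rightarrow> real \<Rightarrow> real" where
  "corner_fun K \<alpha> u = (real \<alpha> - u) / (u + 1) + (real K - real \<alpha>) * (real \<alpha> - u) / real \<alpha>"

lemma corner_R_eq_corner_fun:
  assumes "1 \<le> \<alpha>" "\<alpha> \<le> K" "t \<le> \<alpha>"
  shows "corner_R K \<alpha> t = corner_fun K \<alpha> (real t)"
proof -
  have absorb: "real (t + 1) * real (\<alpha> choose (t + 1)) = real \<alpha> * real ((\<alpha> - 1) choose t)"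
    using binomial_absorption[of t \<alpha>] by (metis Suc_eq_plus1 mult.commute of_nat_mult)
  have absorb_comp: "(real \<alpha> - t) * real (\<alpha> choose t) = real \<alpha> * real ((\<alpha> - 1) choose t)"
    using binomial_absorb_comp[of \<alpha> t] assms(3) by (metis of_nat_diff of_nat_mult)
  have pos: "real (\<alpha> choose t) > 0" "real \<alpha> > 0"
    using assms by auto
  have next_choose: "real (\<alpha> choose (t + 1)) = (real \<alpha> - t) * real (\<alpha> choose t) / (t + 1)"
    using absorb absorb_comp by (simp add: field_simps)
  have pred_choose: "real ((\<alpha> - 1) choose t) = (real \<alpha> - t) * real (\<alpha> choose t) / \<alpha>"
    using absorb_comp pos by (simp add: field_simps)
  show ?thesis
    using assms pos unfolding corner_R_def corner_fun_def next_choose pred_choose of_nat_diff[OF assms(2)]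
    by (simp add: divide_simps) (simp add: algebra_simps)
qed

lemma corner_R_closed_form:
  assumes "1 \<le> \<alpha>" "\<alpha> \<le> K" "t \<le> \<alpha>"
  shows "corner_R K \<alpha> t = real K * (1 - real K * (real t / real K) / real \<alpha>)
           / (real K * (real t / real K) + 1) * ((real K - real \<alpha>) * (real t / real K) + 1)"
proof -
  have "real K > 0" "real \<alpha> > 0" "real t + 1 > 0"
    using assms by auto
  then show ?thesis
    unfolding corner_R_eq_corner_fun[OF assms] corner_fun_def
    by (simp add: divide_simps) (simp add: algebra_simps)
qed

lemma inverse_chord_le:
  fixes c :: real and t u :: nat
  assumes "c \<ge> 0"
  shows "c / (real t + 1) + (real u - t) * (c / (real t + 2) - c / (real t + 1)) \<le> c / (real u + 1)"
proof -
  have "(real u - t) * (real u - t - 1) \<ge> 0"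
    by (cases "u \<le> t") (auto intro: mult_nonpos_nonpos mult_nonneg_nonneg)
  then have "0 \<le> c * ((real u - t) * (real u - t - 1)) / ((real t + 1) * (real t + 2) * (real u + 1))"
    using assms by simp
  also have "\<dots> = c / (real u + 1) - (c / (real t + 1) + (real u - t) * (c / (real t + 2) - c / (real t + 1)))"
  proof -
    have "real u + 1 > 0" "real t + 1 > 0" "real t + 2 > 0"
      by auto
    then show ?thesis
      by (simp add: divide_simps) (simp add: algebra_simps)
  qed
  finally show ?thesis by simp
qed

lemma corner_fun_eq_hyperbola_plus_affine:
  assumes "\<alpha> \<ge> 1" "u \<ge> 0"
  shows "corner_fun K \<alpha> u = (real \<alpha> + 1) / (u + 1) - 1 + (real K - \<alpha>) * (\<alpha> - u) / \<alpha>"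
  using assms unfolding corner_fun_def by (simp add: field_simps)

lemma corner_fun_above_chord:
  fixes t u :: nat
  assumes "\<alpha> \<ge> 1"
  shows "corner_fun K \<alpha> t + (real u - t) * (corner_fun K \<alpha> (real t + 1) - corner_fun K \<alpha> t)
           \<le> corner_fun K \<alpha> u"
proof -
  have "(real K - \<alpha>) * (real \<alpha> - u) / \<alpha> = (real K - \<alpha>) * (real \<alpha> - t) / \<alpha>
      + (real u - t) * ((real K - \<alpha>) * (real \<alpha> - (real t + 1)) / \<alpha> - (real K - \<alpha>) * (real \<alpha> - t) / \<alpha>)"
    using assms by (simp add: field_simps)
  moreover have "real t + 1 + 1 = real t + 2"
    by simp
  ultimately show ?thesis
    using inverse_chord_le[of "real \<alpha> + 1" t u] assms
    by (simp add: corner_fun_eq_hyperbola_plus_affine algebra_simps)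
qed

lemma corner_fun_step_nonpos:
  fixes t :: nat
  assumes "1 \<le> \<alpha>" "\<alpha> \<le> K"
  shows "corner_fun K \<alpha> (real t + 1) - corner_fun K \<alpha> t \<le> 0"
proof -
  have "(real \<alpha> + 1) / (real t + 1 + 1) \<le> (real \<alpha> + 1) / (real t + 1)"
    by (intro divide_left_mono) auto
  moreover have "(real K - \<alpha>) * (real \<alpha> - (real t + 1)) / \<alpha> \<le> (real K - \<alpha>) * (real \<alpha> - t) / \<alpha>"
    using assms by (intro divide_right_mono mult_left_mono) auto
  moreover have "corner_fun K \<alpha> t = (real \<alpha> + 1) / (real t + 1) - 1 + (real K - \<alpha>) * (real \<alpha> - t) / \<alpha>"
    using assms by (intro corner_fun_eq_hyperbola_plus_affine) auto
  moreover have "corner_fun K \<alpha> (real t + 1)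
      = (real \<alpha> + 1) / (real t + 1 + 1) - 1 + (real K - \<alpha>) * (real \<alpha> - (real t + 1)) / \<alpha>"
    using assms by (intro corner_fun_eq_hyperbola_plus_affine) auto
  ultimately show ?thesis
    by linarith
qed

lemma R_LB_eq_chord:
  fixes M :: real
  assumes "1 \<le> \<alpha>" "\<alpha> \<le> K" "F \<ge> 1"
  defines "t \<equiv> min (\<alpha> - 1) (nat \<lfloor>M * real K / real (num_files K \<alpha> F)\<rfloor>)"
  shows "R_LB K \<alpha> F M = corner_fun K \<alpha> t
           + (real K * M / real (num_files K \<alpha> F) - t) * (corner_fun K \<alpha> (real t + 1) - corner_fun K \<alpha> t)"
proof -
  have "real (num_files K \<alpha> F) > 0" "real K > 0"
    using assms unfolding num_files_def by auto
  then have weight: "(M - corner_M K \<alpha> F t) / (corner_M K \<alpha> F (t + 1) - corner_M K \<alpha> F t)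
      = real K * M / real (num_files K \<alpha> F) - t"
    unfolding corner_M_def by (simp add: field_simps)
  have "corner_R K \<alpha> t = corner_fun K \<alpha> t"
    using assms by (intro corner_R_eq_corner_fun) auto
  moreover have "corner_R K \<alpha> (t + 1) = corner_fun K \<alpha> (real t + 1)"
    using assms corner_R_eq_corner_fun[of \<alpha> K "t + 1"] by (simp add: add.commute)
  ultimately show ?thesis
    unfolding R_LB_def Let_def t_def[symmetric] weight by (simp add: algebra_simps)
qed

lemma R_LB_corner_M:
  assumes "1 \<le> \<alpha>" "\<alpha> \<le> K" "F \<ge> 1" "t \<le> \<alpha>"
  shows "R_LB K \<alpha> F (corner_M K \<alpha> F t) = corner_R K \<alpha> t"
proof -
  have "real (num_files K \<alpha> F) > 0" "real K > 0"
    using assms unfolding num_files_def by auto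
  then have "nat \<lfloor>corner_M K \<alpha> F t * real K / real (num_files K \<alpha> F)\<rfloor> = t"
    unfolding corner_M_def by simp
  then show ?thesis
    using assms R_LB_eq_chord[OF assms(1-3), of "corner_M K \<alpha> F t"]
      corner_R_eq_corner_fun[OF assms(1,2,4)]
    by (cases "t = \<alpha>") (auto simp: corner_M_def)
qed

lemma chord_bound_of_sums:
  fixes g :: "nat \<Rightarrow> real" and \<tau> :: "'a \<Rightarrow> nat"
  assumes chord: "\<And>u. g t + (real u - t) * \<Delta> \<le> g u" and "\<Delta> \<le> 0"
    and X: "finite X" "X \<noteq> {}"
    and sum_g: "(\<Sum>x\<in>X. g (\<tau> x)) \<le> real (card X) * R"
    and sum_\<tau>: "(\<Sum>x\<in>X. real (\<tau> x)) \<le> real (card X) * m"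
  shows "g t + (m - t) * \<Delta> \<le> R"
proof -
  have "real (card X) * (g t + (m - t) * \<Delta>) \<le> real (card X) * (g t - t * \<Delta>) + \<Delta> * (\<Sum>x\<in>X. real (\<tau> x))"
    using mult_left_mono_neg[OF sum_\<tau> \<open>\<Delta> \<le> 0\<close>] by (simp add: algebra_simps)
  also have "\<dots> = (\<Sum>x\<in>X. g t + (real (\<tau> x) - t) * \<Delta>)"
    by (simp add: sum.distrib sum_distrib_left sum_subtractf algebra_simps)
  also have "\<dots> \<le> (\<Sum>x\<in>X. g (\<tau> x))"
    by (intro sum_mono chord)
  also have "\<dots> \<le> real (card X) * R"
    by (fact sum_g)
  finally show ?thesis
    using X by (simp add: card_gt_0_iff)
qed

section \<open>Counting bits determined by the broadcast\<close>

lemma card_le_of_inj_on_Pow: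
  fixes g :: "'a set \<Rightarrow> bool list"
  assumes "finite A" "inj_on g (Pow A)" "\<And>X. X \<subseteq> A \<Longrightarrow> length (g X) \<le> L"
  shows "card A \<le> L"
proof -
  let ?Lists = "{xs. set xs \<subseteq> (UNIV :: bool set) \<and> length xs \<le> L}"
  have "(2::nat) ^ card A = card (g ` Pow A)"
    using assms(1,2) by (simp add: card_image card_Pow)
  also have "\<dots> \<le> card ?Lists"
    using assms(3) by (intro card_mono finite_lists_length_le) auto
  also have "\<dots> = (\<Sum>i\<le>L. 2 ^ i)"
    using card_lists_length_le[of "UNIV :: bool set" L] by simp
  also have "\<dots> < 2 ^ Suc L"
    by (induction L) auto
  finally show ?thesis
    using power_strict_increasing_iff[of "2::nat" "card A" "Suc L"] by simp
qed

definition library_of :: "(file_idx \<times> nat) set \<Rightarrow> library" where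
  "library_of X = (\<lambda>i b. (i, b) \<in> X)"

text \<open>The bits of the requested files that no earlier user of the chain J has cached: if each
  user decodes its file, the broadcast together with the caches determines these bits successively
  along J, so the broadcast alone determines all of them.\<close>

definition chain_bits ::
    "(nat \<Rightarrow> (file_idx \<times> nat) set) \<Rightarrow> nat \<Rightarrow> (nat \<Rightarrow> file_idx) \<Rightarrow> (nat \<Rightarrow> nat) \<Rightarrow> nat set
      \<Rightarrow> (file_idx \<times> nat) set"
  where "chain_bits Z B e u J =
    {(e j, b) | j b. j \<in> J \<and> b < B \<and> (\<forall>l\<in>J. l \<le> j \<longrightarrow> (e j, b) \<notin> Z (u l))}"

lemma library_of_in_libraries:
  assumes "\<And>j. j \<in> J \<Longrightarrow> e j \<in> files K \<alpha> F" "X \<subseteq> chain_bits Z B e u J"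
  shows "library_of X \<in> libraries K \<alpha> F B"
  using assms unfolding libraries_def library_of_def chain_bits_def by auto

text \<open>The cache of user u j holds only those chain bits that belong to earlier files of the chain.\<close>

lemma cache_of_library_of_eq:
  assumes "X \<subseteq> chain_bits Z B e u J" "Y \<subseteq> chain_bits Z B e u J" "j \<in> J"
    and earlier: "\<And>l b. l \<in> J \<Longrightarrow> l < j \<Longrightarrow> (e l, b) \<in> X \<longleftrightarrow> (e l, b) \<in> Y"
  shows "cache_of (Z (u j)) (library_of X) = cache_of (Z (u j)) (library_of Y)"
proof
  fix p
  show "cache_of (Z (u j)) (library_of X) p = cache_of (Z (u j)) (library_of Y) p"
  proof (cases "p \<in> Z (u j) \<and> p \<in> chain_bits Z B e u J")
    case True
    then obtain l b where "p = (e l, b)" "l \<in> J" "\<forall>l'\<in>J. l' \<le> l \<longrightarrow> p \<notin> Z (u l')"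
      unfolding chain_bits_def by blast
    moreover from this True \<open>j \<in> J\<close> have "l < j"
      by (meson not_le)
    ultimately show ?thesis
      using earlier unfolding cache_of_def library_of_def by simp
  next
    case False
    then show ?thesis
      using assms(1,2) unfolding cache_of_def library_of_def by auto
  qed
qed

lemma encoding_inj_on_chain_bits:
  assumes files: "\<And>j. j \<in> J \<Longrightarrow> e j \<in> files K \<alpha> F"
    and decodes: "\<And>j W b. j \<in> J \<Longrightarrow> W \<in> libraries K \<alpha> F B \<Longrightarrow> b < B \<Longrightarrow>
                    dec (u j) (enc W) (cache_of (Z (u j)) W) b = W (e j) b"
  shows "inj_on (\<lambda>X. enc (library_of X)) (Pow (chain_bits Z B e u J))"
proof (rule inj_onI)
  let ?A = "chain_bits Z B e u J"
  fix X Y assume "X \<in> Pow ?A" "Y \<in> Pow ?A" and same_enc: "enc (library_of X) = enc (library_of Y)"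
  then have X: "X \<subseteq> ?A" and Y: "Y \<subseteq> ?A"
    by auto
  have libs: "library_of X \<in> libraries K \<alpha> F B" "library_of Y \<in> libraries K \<alpha> F B"
    using X Y by (auto intro: library_of_in_libraries[OF files])
  have "(e j, b) \<in> X \<longleftrightarrow> (e j, b) \<in> Y" if "j \<in> J" for j b
    using that
  proof (induction j arbitrary: b rule: less_induct)
    case (less j)
    show ?case
    proof (cases "b < B")
      case True
      have "library_of X (e j) b = dec (u j) (enc (library_of X)) (cache_of (Z (u j)) (library_of X)) b"
        using decodes[OF less.prems libs(1) True] by simp
      also have "\<dots> = dec (u j) (enc (library_of Y)) (cache_of (Z (u j)) (library_of Y)) b"
        using same_enc cache_of_library_of_eq[OF X Y less.prems less.IH] by simp
      also have "\<dots> = library_of Y (e j) b"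
        using decodes[OF less.prems libs(2) True] .
      finally show ?thesis
        unfolding library_of_def .
    next
      case False
      then show ?thesis
        using X Y unfolding chain_bits_def by auto
    qed
  qed
  then show "X = Y"
    using X Y unfolding chain_bits_def by blast
qed

lemma card_chain_bits_le:
  fixes enc :: "library \<Rightarrow> bool list"
  assumes "finite J"
    and length: "\<And>W. W \<in> libraries K \<alpha> F B \<Longrightarrow> real (length (enc W)) \<le> R * real B"
    and files: "\<And>j. j \<in> J \<Longrightarrow> e j \<in> files K \<alpha> F"
    and decodes: "\<And>j W b. j \<in> J \<Longrightarrow> W \<in> libraries K \<alpha> F B \<Longrightarrow> b < B \<Longrightarrow>
                    dec (u j) (enc W) (cache_of (Z (u j)) W) b = W (e j) b"
  shows "real (card (chain_bits Z B e u J)) \<le> R * real B"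
proof -
  let ?A = "chain_bits Z B e u J"
  have "?A \<subseteq> (\<lambda>(j, b). (e j, b)) ` (J \<times> {..<B})"
    unfolding chain_bits_def by auto
  moreover have "finite ((\<lambda>(j, b). (e j, b)) ` (J \<times> {..<B}))"
    using \<open>finite J\<close> by simp
  ultimately have "finite ?A"
    by (rule finite_subset)
  have "library_of {} \<in> libraries K \<alpha> F B"
    by (rule library_of_in_libraries[OF files]) simp_all
  then have "R * real B \<ge> 0"
    using length by (meson of_nat_0_le_iff order_trans)
  have short: "length (enc (library_of X)) \<le> nat \<lfloor>R * real B\<rfloor>" if "X \<subseteq> ?A" for X
  proof -
    have "real (length (enc (library_of X))) \<le> R * real B"
      using length[OF library_of_in_libraries[OF files that]] .
    then have "int (length (enc (library_of X))) \<le> \<lfloor>R * real B\<rfloor>"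
      by (simp add: le_floor_iff)
    then show ?thesis
      by linarith
  qed
  have inj: "inj_on (\<lambda>X. enc (library_of X)) (Pow ?A)"
    using files decodes by (rule encoding_inj_on_chain_bits)
  have "real (card ?A) \<le> real (nat \<lfloor>R * real B\<rfloor>)"
    using card_le_of_inj_on_Pow[OF \<open>finite ?A\<close> inj short] by (rule of_nat_mono)
  also have "\<dots> \<le> R * real B"
    using \<open>R * real B \<ge> 0\<close> by linarith
  finally show ?thesis .
qed

lemma card_chain_bits_eq_sum:
  assumes "finite J" "inj_on e J"
  shows "card (chain_bits Z B e u J)
    = (\<Sum>j\<in>J. card {b. b < B \<and> (\<forall>l\<in>J. l \<le> j \<longrightarrow> (e j, b) \<notin> Z (u l))})"
proof -
  define bits where "bits j = {b. b < B \<and> (\<forall>l\<in>J. l \<le> j \<longrightarrow> (e j, b) \<notin> Z (u l))}" for j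
  have "chain_bits Z B e u J = (\<Union>j\<in>J. Pair (e j) ` bits j)"
    unfolding chain_bits_def bits_def by blast
  also have "card \<dots> = (\<Sum>j\<in>J. card (Pair (e j) ` bits j))"
    using assms by (intro card_UN_disjoint) (auto simp: bits_def inj_on_def)
  also have "\<dots> = (\<Sum>j\<in>J. card (bits j))"
    by (intro sum.cong refl card_image) (simp add: inj_on_def)
  finally show ?thesis
    unfolding bits_def .
qed

section \<open>Counting permutations\<close>

lemma sum_card_swap:
  assumes "finite A" "finite B"
  shows "(\<Sum>x\<in>A. card {y\<in>B. R x y}) = (\<Sum>y\<in>B. card {x\<in>A. R x y})"
  using sum.swap_restrict[OF assms, of "\<lambda>_ _. 1::nat" R] by simp

definition perm_count :: "'a set \<Rightarrow> 'a set \<Rightarrow> 'a set \<Rightarrow> 'a set \<Rightarrow> 'a set \<Rightarrow> nat" where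
  "perm_count A C P S T = card {\<pi>\<in>{\<pi>. \<pi> permutes A}. \<pi> ` C = S \<and> T \<inter> \<pi> ` P = {}}"

lemma perm_count_image:
  assumes \<sigma>: "\<sigma> permutes A"
  shows "perm_count A C P (\<sigma> ` S) (\<sigma> ` T) = perm_count A C P S T"
proof -
  let ?Q = "\<lambda>S T. {\<pi>\<in>{\<pi>. \<pi> permutes A}. \<pi> ` C = S \<and> T \<inter> \<pi> ` P = {}}"
  have inj: "inj \<sigma>"
    using permutes_inj[OF \<sigma>] .
  have "bij_betw (\<lambda>\<pi>. \<sigma> \<circ> \<pi>) (?Q S T) (?Q (\<sigma> ` S) (\<sigma> ` T))"
  proof (rule bij_betwI[where g = "\<lambda>\<pi>. inv \<sigma> \<circ> \<pi>"])
    show "(\<lambda>\<pi>. \<sigma> \<circ> \<pi>) \<in> ?Q S T \<rightarrow> ?Q (\<sigma> ` S) (\<sigma> ` T)"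
      using \<sigma> inj by (auto simp: permutes_compose image_comp[symmetric] image_Int[symmetric] inj_eq)
    show "(\<lambda>\<pi>. inv \<sigma> \<circ> \<pi>) \<in> ?Q (\<sigma> ` S) (\<sigma> ` T) \<rightarrow> ?Q S T"
    proof
      fix \<pi> assume "\<pi> \<in> ?Q (\<sigma> ` S) (\<sigma> ` T)"
      then have \<pi>: "\<pi> permutes A" "\<pi> ` C = \<sigma> ` S" "\<sigma> ` T \<inter> \<pi> ` P = {}"
        by auto
      have "(inv \<sigma> \<circ> \<pi>) ` C = inv \<sigma> ` \<sigma> ` S"
        unfolding image_comp[symmetric] \<pi>(2) ..
      then have "(inv \<sigma> \<circ> \<pi>) ` C = S"
        using inj by (simp add: image_inv_f_f)
      moreover have "\<sigma> ` (T \<inter> (inv \<sigma> \<circ> \<pi>) ` P) = \<sigma> ` T \<inter> \<pi> ` P"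
        using inj surj_f_inv_f[OF permutes_surj[OF \<sigma>]]
        by (simp add: image_Int image_comp comp_def)
      then have "T \<inter> (inv \<sigma> \<circ> \<pi>) ` P = {}"
        using \<pi>(3) by simp
      ultimately show "inv \<sigma> \<circ> \<pi> \<in> ?Q S T"
        using \<pi>(1) permutes_inv[OF \<sigma>] by (simp add: permutes_compose)
    qed
  qed (simp_all add: comp_assoc[symmetric] permutes_inv_o[OF \<sigma>])
  then show ?thesis
    unfolding perm_count_def by (rule bij_betw_same_card[symmetric])
qed

lemma exists_permutes_pair:
  assumes A: "finite A" and "T \<subseteq> S" "S \<subseteq> A" "T' \<subseteq> S'" "S' \<subseteq> A"
    and "card S = card S'" "card T = card T'"
  shows "\<exists>\<sigma>. \<sigma> permutes A \<and> \<sigma> ` S = S' \<and> \<sigma> ` T = T'"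
proof -
  have fin: "finite S" "finite S'" "finite T" "finite T'"
    using assms by (meson finite_subset)+
  obtain g1 where g1: "bij_betw g1 T T'"
    using fin assms(7) finite_same_card_bij by blast
  obtain g2 where g2: "bij_betw g2 (S - T) (S' - T')"
    using fin assms by (metis card_Diff_subset finite_Diff finite_same_card_bij)
  obtain g3 where g3: "bij_betw g3 (A - S) (A - S')"
    using A fin assms by (metis card_Diff_subset finite_Diff finite_same_card_bij)
  define \<sigma> where "\<sigma> x = (if x \<in> T then g1 x else if x \<in> S then g2 x else if x \<in> A then g3 x else x)" for x
  have "bij_betw \<sigma> T T'"
    using g1 by (rule bij_betw_cong[THEN iffD1, rotated]) (auto simp: \<sigma>_def)
  moreover have "bij_betw \<sigma> (S - T) (S' - T')"
    using g2 by (rule bij_betw_cong[THEN iffD1, rotated]) (auto simp: \<sigma>_def)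
  ultimately have S: "bij_betw \<sigma> S S'"
    using bij_betw_combine[of \<sigma> T T' "S - T" "S' - T'"] assms by (simp add: Un_absorb1)
  moreover have "bij_betw \<sigma> (A - S) (A - S')"
    using g3 by (rule bij_betw_cong[THEN iffD1, rotated]) (use assms in \<open>auto simp: \<sigma>_def\<close>)
  ultimately have "bij_betw \<sigma> A A"
    using bij_betw_combine[of \<sigma> S S' "A - S" "A - S'"] assms by (simp add: Un_absorb1)
  then have "\<sigma> permutes A"
    by (rule bij_imp_permutes) (use assms in \<open>auto simp: \<sigma>_def\<close>)
  then show ?thesis
    using S \<open>bij_betw \<sigma> T T'\<close> by (auto simp: bij_betw_def)
qed

definition subset_pairs :: "'a set \<Rightarrow> nat \<Rightarrow> nat \<Rightarrow> ('a set \<times> 'a set) set" where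
  "subset_pairs A s t = {(S, T). S \<subseteq> A \<and> card S = s \<and> T \<subseteq> S \<and> card T = t}"

lemma finite_subset_pairs: "finite A \<Longrightarrow> finite (subset_pairs A s t)"
  by (rule finite_subset[of _ "Pow A \<times> Pow A"]) (auto simp: subset_pairs_def)

lemma card_subset_pairs:
  assumes "finite A"
  shows "card (subset_pairs A s t) = (card A choose s) * (s choose t)"
proof -
  have "subset_pairs A s t = Sigma {S. S \<subseteq> A \<and> card S = s} (\<lambda>S. {T. T \<subseteq> S \<and> card T = t})"
    unfolding subset_pairs_def by auto
  also have "card \<dots> = (\<Sum>S\<in>{S. S \<subseteq> A \<and> card S = s}. card {T. T \<subseteq> S \<and> card T = t})"
    using assms by (intro card_SigmaI) (auto intro: finite_subset[of _ "Pow A"])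
  also have "\<dots> = (\<Sum>S\<in>{S. S \<subseteq> A \<and> card S = s}. s choose t)"
    using assms by (intro sum.cong refl) (auto simp: n_subsets finite_subset)
  also have "\<dots> = (card A choose s) * (s choose t)"
    using assms by (simp add: n_subsets)
  finally show ?thesis .
qed

lemma sum_perm_count_subset_pairs:
  assumes A: "finite A" "C \<subseteq> A"
  shows "(\<Sum>x\<in>subset_pairs A (card C) t. perm_count A C P (fst x) (snd x))
    = fact (card A) * (card (C - P) choose t)"
proof -
  let ?Perms = "{\<pi>. \<pi> permutes A}" and ?Pairs = "subset_pairs A (card C) t"
  have pairs_of: "{x\<in>?Pairs. \<pi> ` C = fst x \<and> snd x \<inter> \<pi> ` P = {}}
      = Pair (\<pi> ` C) ` {T. T \<subseteq> \<pi> ` (C - P) \<and> card T = t}" if "\<pi> permutes A" for \<pi>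
  proof -
    have "inj \<pi>"
      using permutes_inj[OF that] .
    then have "\<pi> ` (C - P) = \<pi> ` C - \<pi> ` P" "card (\<pi> ` C) = card C"
      by (simp_all add: image_set_diff card_image inj_on_subset)
    moreover have "\<pi> ` C \<subseteq> A"
      using A(2) permutes_image[OF that] by blast
    ultimately show ?thesis
      unfolding subset_pairs_def by (force simp: image_iff)
  qed
  have "(\<Sum>x\<in>?Pairs. perm_count A C P (fst x) (snd x))
      = (\<Sum>\<pi>\<in>?Perms. card {x\<in>?Pairs. \<pi> ` C = fst x \<and> snd x \<inter> \<pi> ` P = {}})"
    unfolding perm_count_def using A(1)
    by (intro sum_card_swap finite_subset_pairs finite_permutations)
  also have "\<dots> = (\<Sum>\<pi>\<in>?Perms. card (C - P) choose t)"
  proof (rule sum.cong)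
    fix \<pi> assume "\<pi> \<in> ?Perms"
    then have "\<pi> permutes A"
      by simp
    moreover have "finite (C - P)"
      using A finite_subset by blast
    moreover have "card (\<pi> ` (C - P)) = card (C - P)"
      using permutes_inj[OF \<open>\<pi> permutes A\<close>] by (simp add: card_image inj_on_subset)
    ultimately show "card {x\<in>?Pairs. \<pi> ` C = fst x \<and> snd x \<inter> \<pi> ` P = {}} = card (C - P) choose t"
      unfolding pairs_of[OF \<open>\<pi> permutes A\<close>] by (simp add: card_image inj_on_def n_subsets)
  qed simp
  also have "\<dots> = fact (card A) * (card (C - P) choose t)"
    using A(1) by (simp add: card_permutations)
  finally show ?thesis .
qed

text \<open>The permutations of A act transitively on subset_pairs A (card C) t, so by
  perm_count_image the count is the same for every pair.\<close>

lemma perm_count_eq: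
  assumes A: "finite A" "C \<subseteq> A" and ST: "(S, T) \<in> subset_pairs A (card C) t"
  shows "perm_count A C P S T * ((card A choose card C) * (card C choose t))
    = fact (card A) * (card (C - P) choose t)"
proof -
  have "perm_count A C P (fst x) (snd x) = perm_count A C P S T"
    if x_mem: "x \<in> subset_pairs A (card C) t" for x
  proof -
    obtain S' T' where x: "x = (S', T')"
      by fastforce
    obtain \<sigma> where "\<sigma> permutes A" "\<sigma> ` S = S'" "\<sigma> ` T = T'"
      using exists_permutes_pair[OF A(1), of T S T' S'] x_mem ST unfolding x subset_pairs_def by auto
    then show ?thesis
      using perm_count_image x by (metis fst_conv snd_conv)
  qed
  then have "(\<Sum>x\<in>subset_pairs A (card C) t. perm_count A C P (fst x) (snd x))
      = perm_count A C P S T * card (subset_pairs A (card C) t)"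
    by simp
  then show ?thesis
    using sum_perm_count_subset_pairs[OF A] card_subset_pairs[OF A(1)] by simp
qed

lemma sum_perm_count_classes:
  assumes A: "finite A" "C \<subseteq> A"
  shows "(\<Sum>S\<in>{S. S \<subseteq> A \<and> card S = card C}. perm_count A C P S (T S))
    = card {\<pi>\<in>{\<pi>. \<pi> permutes A}. T (\<pi> ` C) \<inter> \<pi> ` P = {}}"
proof -
  let ?Perms = "{\<pi>. \<pi> permutes A}" and ?Cls = "{S. S \<subseteq> A \<and> card S = card C}"
  have fin: "finite ?Perms" "finite ?Cls"
    using A(1) by (auto intro: finite_permutations finite_subset[of _ "Pow A"])
  have classes_of: "{S\<in>?Cls. \<pi> ` C = S \<and> T S \<inter> \<pi> ` P = {}}
      = (if T (\<pi> ` C) \<inter> \<pi> ` P = {} then {\<pi> ` C} else {})" if "\<pi> permutes A" for \<pi>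
  proof -
    have "\<pi> ` C \<in> ?Cls"
      using A(2) permutes_image[OF that] permutes_inj[OF that] by (auto simp: card_image inj_on_subset)
    then show ?thesis
      by auto
  qed
  have "(\<Sum>S\<in>?Cls. perm_count A C P S (T S)) = (\<Sum>\<pi>\<in>?Perms. card {S\<in>?Cls. \<pi> ` C = S \<and> T S \<inter> \<pi> ` P = {}})"
    unfolding perm_count_def using fin by (intro sum_card_swap)
  also have "\<dots> = (\<Sum>\<pi>\<in>?Perms. of_bool (T (\<pi> ` C) \<inter> \<pi> ` P = {}))"
    using classes_of by (intro sum.cong refl) simp
  also have "\<dots> = card {\<pi>\<in>?Perms. T (\<pi> ` C) \<inter> \<pi> ` P = {}}"
    using fin(1) by (simp add: Int_def)
  finally show ?thesis .
qed

section \<open>Demands along cyclic windows\<close>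

text \<open>The cyclic window of the \<alpha> consecutive users j, j+1, ..., j+\<alpha>-1 modulo K.\<close>

definition window :: "nat \<Rightarrow> nat \<Rightarrow> nat \<Rightarrow> nat set" where
  "window K \<alpha> j = {j..min K (j + \<alpha> - 1)} \<union> {1..j + \<alpha> - 1 - K}"

lemma mem_window_iff:
  "1 \<le> \<alpha> \<Longrightarrow> x \<in> window K \<alpha> j \<longleftrightarrow> j \<le> x \<and> x \<le> K \<and> x < j + \<alpha> \<or> 1 \<le> x \<and> x + K < j + \<alpha>"
  unfolding window_def by auto

context
  fixes K \<alpha> j :: nat
  assumes \<alpha>: "1 \<le> \<alpha>" "\<alpha> \<le> K" and j: "j \<in> {1..K}"
begin

lemma window_subset: "window K \<alpha> j \<subseteq> {1..K}"
  using \<alpha> j unfolding window_def by auto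

lemma self_mem_window: "j \<in> window K \<alpha> j"
  using \<alpha> j unfolding window_def by auto

lemma card_window: "card (window K \<alpha> j) = \<alpha>"
proof -
  have "card (window K \<alpha> j) = card {j..min K (j + \<alpha> - 1)} + card {1..j + \<alpha> - 1 - K}"
    unfolding window_def using \<alpha> by (intro card_Un_disjoint) auto
  also have "\<dots> = \<alpha>"
    using \<alpha> j by (cases "j + \<alpha> - 1 \<le> K") (simp_all add: min_def)
  finally show ?thesis .
qed

lemma window_diff_atLeastAtMost: "window K \<alpha> j - {1..j} = {j + 1..min K (j + \<alpha> - 1)}"
  using \<alpha> j unfolding window_def by auto

end

lemma window_neq:
  assumes "1 \<le> \<alpha>" "\<alpha> < K" "1 \<le> j" "j < j'" "j' \<le> K"
  shows "window K \<alpha> j \<noteq> window K \<alpha> j'"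
proof -
  consider "j' + \<alpha> \<le> j + K" | "j' \<le> j + \<alpha>" "j + K < j' + \<alpha>" | "j + \<alpha> < j'" "j + K < j' + \<alpha>"
    by linarith
  then show ?thesis
  proof cases
    case 1
    then have "j \<in> window K \<alpha> j" "j \<notin> window K \<alpha> j'"
      using assms unfolding mem_window_iff[OF assms(1)] by arith+
    then show ?thesis
      by blast
  next
    case 2
    then have "j' - 1 \<in> window K \<alpha> j" "j' - 1 \<notin> window K \<alpha> j'"
      using assms unfolding mem_window_iff[OF assms(1)] by arith+
    then show ?thesis
      by blast
  next
    case 3
    then have "K \<notin> window K \<alpha> j" "K \<in> window K \<alpha> j'"
      using assms unfolding mem_window_iff[OF assms(1)] by arith+
    then show ?thesis
      by blast
  qed
qed

lemma inj_on_window: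
  assumes "1 \<le> \<alpha>" "\<alpha> < K"
  shows "inj_on (window K \<alpha>) {1..K}"
proof (rule inj_onI)
  fix j j' assume "j \<in> {1..K}" "j' \<in> {1..K}" "window K \<alpha> j = window K \<alpha> j'"
  then show "j = j'"
    using window_neq[OF assms] by (cases j j' rule: linorder_cases) auto
qed

lemma sum_choose_card_window_diff:
  assumes "1 \<le> \<alpha>" "\<alpha> \<le> K"
  shows "(\<Sum>j\<in>{1..K}. card (window K \<alpha> j - {1..j}) choose t)
    = (\<alpha> choose (t + 1)) + (K - \<alpha>) * ((\<alpha> - 1) choose t)"
proof -
  let ?d = "\<lambda>j. min K (j + \<alpha> - 1) - j"
  have diff: "(\<Sum>j\<in>{1..K}. card (window K \<alpha> j - {1..j}) choose t) = (\<Sum>j\<in>{1..K}. ?d j choose t)"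
    using window_diff_atLeastAtMost[OF assms] by (intro sum.cong) auto
  have "{1..K} = {1..K - \<alpha> + 1} \<union> {K - \<alpha> + 2..K}"
    using assms by auto
  then have split: "(\<Sum>j\<in>{1..K}. ?d j choose t)
      = (\<Sum>j\<in>{1..K - \<alpha> + 1}. ?d j choose t) + (\<Sum>j\<in>{K - \<alpha> + 2..K}. ?d j choose t)"
    by (simp add: sum.union_disjoint)
  have "(\<Sum>j\<in>{1..K - \<alpha> + 1}. ?d j choose t) = (\<Sum>j\<in>{1..K - \<alpha> + 1}. (\<alpha> - 1) choose t)"
    using assms by (intro sum.cong) auto
  then have head: "(\<Sum>j\<in>{1..K - \<alpha> + 1}. ?d j choose t) = (K - \<alpha>) * ((\<alpha> - 1) choose t) + ((\<alpha> - 1) choose t)"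
    using assms by simp
  have tail: "(\<Sum>j\<in>{K - \<alpha> + 2..K}. ?d j choose t) = (\<Sum>r<\<alpha> - 1. r choose t)"
    using assms
    by (intro sum.reindex_bij_witness[of _ "\<lambda>r. K - r" "\<lambda>j. K - j"]) (auto simp: min_def)
  have "(\<Sum>r<\<alpha> - 1. r choose t) + ((\<alpha> - 1) choose t) = (\<Sum>r\<le>\<alpha> - 1. r choose t)"
    by (simp only: lessThan_Suc_atMost[symmetric] sum.lessThan_Suc)
  also have "\<dots> = Suc (\<alpha> - 1) choose Suc t"
    by (rule sum_choose_upper)
  also have "\<dots> = \<alpha> choose (t + 1)"
    using assms by simp
  finally show ?thesis
    unfolding diff split head tail by linarith
qed

definition shift :: "nat \<Rightarrow> nat \<Rightarrow> nat \<Rightarrow> nat" where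
  "shift F c f = (f - 1 + c) mod F + 1"

lemma mod_add_left_inj:
  fixes a x y F :: nat
  assumes "(a + x) mod F = (a + y) mod F" "x < F" "y < F"
  shows "x = y"
proof -
  have "x = y" if "x \<le> y" "(a + x) mod F = (a + y) mod F" "x < F" "y < F" for x y
  proof -
    have "F dvd y - x"
      using mod_eq_dvd_iff_nat[of "a + x" "a + y" F] that by simp
    moreover have "y - x < F"
      using that by simp
    ultimately show "x = y"
      using that by (metis diff_is_0_eq dvd_imp_le le_antisym not_le zero_less_diff)
  qed
  then show ?thesis
    using assms by (metis nat_le_linear)
qed

lemma shift_mem: "F \<ge> 1 \<Longrightarrow> shift F c f \<in> {1..F}"
  unfolding shift_def by (simp add: Suc_le_eq)

lemma inj_on_shift: "inj_on (shift F c) {1..F}"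
proof (rule inj_onI)
  fix f f' assume "f \<in> {1..F}" "f' \<in> {1..F}" "shift F c f = shift F c f'"
  then have "(c + (f - 1)) mod F = (c + (f' - 1)) mod F" "f - 1 < F" "f' - 1 < F"
    unfolding shift_def by (auto simp: add.commute)
  then have "f - 1 = f' - 1"
    by (rule mod_add_left_inj)
  then show "f = f'"
    using \<open>f \<in> {1..F}\<close> \<open>f' \<in> {1..F}\<close> by auto
qed

lemma bij_betw_shift:
  assumes "g \<in> {1..F}"
  shows "bij_betw (\<lambda>c. shift F c g) {..<F} {1..F}"
proof -
  have inj: "inj_on (\<lambda>c. shift F c g) {..<F}"
    by (rule inj_onI) (auto simp: shift_def intro: mod_add_left_inj)
  moreover have "(\<lambda>c. shift F c g) ` {..<F} \<subseteq> {1..F}"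
    using assms shift_mem by auto
  moreover have "card ((\<lambda>c. shift F c g) ` {..<F}) = card {1..F}"
    using card_image[OF inj] by simp
  ultimately show ?thesis
    unfolding bij_betw_def by (simp add: card_subset_eq)
qed

text \<open>User \<pi> j requests a file of class \<pi> ` window K \<alpha> j. When \<alpha> = K all windows coincide,
  so the requests are told apart by the file index; this is where N \<ge> K, i.e. F \<ge> K, is needed.\<close>

definition chain_file :: "nat \<Rightarrow> nat \<Rightarrow> nat \<Rightarrow> (nat \<Rightarrow> nat) \<Rightarrow> nat \<Rightarrow> nat \<Rightarrow> file_idx" where
  "chain_file K \<alpha> F \<pi> c j = (shift F c (if \<alpha> = K then j else 1), \<pi> ` window K \<alpha> j)"

lemma chain_file_mem_files:
  assumes "1 \<le> \<alpha>" "\<alpha> \<le> K" "F \<ge> 1" "\<pi> permutes {1..K}" "j \<in> {1..K}"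
  shows "chain_file K \<alpha> F \<pi> c j \<in> files K \<alpha> F"
proof -
  have "\<pi> ` window K \<alpha> j \<subseteq> {1..K}"
    using window_subset[OF assms(1,2,5)] permutes_image[OF assms(4)] by blast
  moreover have "card (\<pi> ` window K \<alpha> j) = \<alpha>"
    using card_window[OF assms(1,2,5)] permutes_inj[OF assms(4)] by (simp add: card_image inj_on_subset)
  ultimately show ?thesis
    using shift_mem[OF assms(3), of c "if \<alpha> = K then j else 1"]
    unfolding chain_file_def files_def by simp
qed

lemma inj_on_chain_file:
  assumes "1 \<le> \<alpha>" "\<alpha> \<le> K" "num_files K \<alpha> F \<ge> K" "\<pi> permutes {1..K}"
  shows "inj_on (chain_file K \<alpha> F \<pi> c) {1..K}"
proof (rule inj_onI)
  fix j j' assume j: "j \<in> {1..K}" "j' \<in> {1..K}"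
    and same: "chain_file K \<alpha> F \<pi> c j = chain_file K \<alpha> F \<pi> c j'"
  show "j = j'"
  proof (cases "\<alpha> = K")
    case True
    then have "shift F c j = shift F c j'" "K \<le> F"
      using same assms(3) by (simp_all add: chain_file_def num_files_def)
    then show ?thesis
      using j inj_on_shift[of F c] by (auto dest: inj_onD)
  next
    case False
    then have "\<pi> ` window K \<alpha> j = \<pi> ` window K \<alpha> j'"
      using same by (simp add: chain_file_def)
    then have "window K \<alpha> j = window K \<alpha> j'"
      using permutes_inj[OF assms(4)] by (simp add: inj_image_eq_iff)
    then show ?thesis
      using inj_on_window[of \<alpha> K] False assms(1,2) j by (auto dest: inj_onD)
  qed
qed

lemma files_eq: "files K \<alpha> F = {1..F} \<times> {S. S \<subseteq> {1..K} \<and> card S = \<alpha>}"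
  unfolding files_def by auto

lemma finite_files: "finite (files K \<alpha> F)"
  unfolding files_eq by (auto intro: finite_subset[of _ "Pow {1..K}"])

lemma card_files: "card (files K \<alpha> F) = num_files K \<alpha> F"
  unfolding files_eq num_files_def by (simp add: card_cartesian_product n_subsets)

definition cachers :: "(nat \<Rightarrow> (file_idx \<times> nat) set) \<Rightarrow> nat \<Rightarrow> file_idx \<times> nat \<Rightarrow> nat set" where
  "cachers Z K p = {k \<in> {1..K}. p \<in> Z k}"

lemma cachers_disjoint_image_iff:
  assumes "\<pi> permutes {1..K}" "j \<le> K"
  shows "cachers Z K p \<inter> \<pi> ` {1..j} = {} \<longleftrightarrow> (\<forall>l\<in>{1..K}. l \<le> j \<longrightarrow> p \<notin> Z (\<pi> l))"
proof
  assume disjoint: "cachers Z K p \<inter> \<pi> ` {1..j} = {}"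
  show "\<forall>l\<in>{1..K}. l \<le> j \<longrightarrow> p \<notin> Z (\<pi> l)"
  proof (intro ballI impI notI)
    fix l assume "l \<in> {1..K}" "l \<le> j" "p \<in> Z (\<pi> l)"
    then have "\<pi> l \<in> cachers Z K p \<inter> \<pi> ` {1..j}"
      using permutes_in_image[OF assms(1)] unfolding cachers_def by auto
    with disjoint show False
      by blast
  qed
next
  assume "\<forall>l\<in>{1..K}. l \<le> j \<longrightarrow> p \<notin> Z (\<pi> l)"
  then show "cachers Z K p \<inter> \<pi> ` {1..j} = {}"
    using assms(2) unfolding cachers_def by auto
qed

lemma demand_of_chain_file:
  assumes "1 \<le> \<alpha>" "\<alpha> \<le> K" "F \<ge> 1" "\<pi> permutes {1..K}"
  shows "(\<lambda>k. chain_file K \<alpha> F \<pi> c (inv \<pi> k)) \<in> demands K \<alpha> F"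
  unfolding demands_def
proof (intro CollectI ballI)
  fix k assume "k \<in> users K"
  then have k: "k \<in> {1..K}"
    by (simp add: users_def)
  then have "inv \<pi> k \<in> {1..K}"
    using permutes_in_image[OF permutes_inv[OF assms(4)]] by simp
  moreover have "k = \<pi> (inv \<pi> k)"
    using permutes_inverses(1)[OF assms(4)] by simp
  ultimately have "k \<in> snd (chain_file K \<alpha> F \<pi> c (inv \<pi> k))"
    using self_mem_window[OF assms(1,2)] unfolding chain_file_def by (metis image_eqI snd_conv)
  then show "chain_file K \<alpha> F \<pi> c (inv \<pi> k) \<in> FDS K \<alpha> F k"
    using chain_file_mem_files[OF assms \<open>inv \<pi> k \<in> {1..K}\<close>] unfolding FDS_def by simp
qed

lemma chain_bound:
  fixes Z :: "nat \<Rightarrow> (file_idx \<times> nat) set" and R :: real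
  assumes \<alpha>: "1 \<le> \<alpha>" "\<alpha> \<le> K" and F: "F \<ge> 1" "num_files K \<alpha> F \<ge> K"
    and \<pi>: "\<pi> permutes {1..K}"
    and code: "\<And>d. d \<in> demands K \<alpha> F \<Longrightarrow>
      \<exists>(enc :: library \<Rightarrow> bool list) (dec :: nat \<Rightarrow> bool list \<Rightarrow> cache_content \<Rightarrow> nat \<Rightarrow> bool).
        \<forall>W \<in> libraries K \<alpha> F B. real (length (enc W)) \<le> R * real B \<and>
          (\<forall>k \<in> users K. \<forall>b < B. dec k (enc W) (cache_of (Z k) W) b = W (d k) b)"
  shows "real (\<Sum>j\<in>{1..K}. card {b. b < B \<and> cachers Z K (chain_file K \<alpha> F \<pi> c j, b) \<inter> \<pi> ` {1..j} = {}})
    \<le> R * real B"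
proof -
  let ?e = "chain_file K \<alpha> F \<pi> c"
  obtain enc :: "library \<Rightarrow> bool list" and dec where
    enc_dec: "\<forall>W \<in> libraries K \<alpha> F B. real (length (enc W)) \<le> R * real B \<and>
      (\<forall>k \<in> users K. \<forall>b < B. dec k (enc W) (cache_of (Z k) W) b = W (?e (inv \<pi> k)) b)"
    using code[OF demand_of_chain_file[OF \<alpha> F(1) \<pi>]] by blast
  have decodes: "dec (\<pi> j) (enc W) (cache_of (Z (\<pi> j)) W) b = W (?e j) b"
    if "j \<in> {1..K}" "W \<in> libraries K \<alpha> F B" "b < B" for j W b
  proof -
    have "\<pi> j \<in> users K"
      using permutes_in_image[OF \<pi>] that(1) by (simp add: users_def)
    then show ?thesis
      using enc_dec that(2,3) permutes_inverses(2)[OF \<pi>] by metis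
  qed
  have "real (card (chain_bits Z B ?e \<pi> {1..K})) \<le> R * real B"
  proof (rule card_chain_bits_le[where enc = enc and dec = dec])
    show "real (length (enc W)) \<le> R * real B" if "W \<in> libraries K \<alpha> F B" for W
      using enc_dec that by blast
  qed (use chain_file_mem_files[OF \<alpha> F(1) \<pi>] decodes in auto)
  moreover have "card (chain_bits Z B ?e \<pi> {1..K})
      = (\<Sum>j\<in>{1..K}. card {b. b < B \<and> cachers Z K (?e j, b) \<inter> \<pi> ` {1..j} = {}})"
    unfolding card_chain_bits_eq_sum[OF finite_atLeastAtMost inj_on_chain_file[OF \<alpha> F(2) \<pi>]]
    using cachers_disjoint_image_iff[OF \<pi>] by (intro sum.cong refl) simp
  ultimately show ?thesis
    by simp
qed

section \<open>Averaging over permutations and shifts\<close>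

lemma sum_perm_count_windows:
  assumes \<alpha>: "1 \<le> \<alpha>" "\<alpha> \<le> K" and ST: "T \<subseteq> S" "S \<subseteq> {1..K}" "card S = \<alpha>"
  shows "real (\<Sum>j\<in>{1..K}. perm_count {1..K} (window K \<alpha> j) {1..j} S T)
    = fact K * corner_fun K \<alpha> (card T) / real (K choose \<alpha>)"
proof -
  define t where "t = card T"
  have "t \<le> \<alpha>"
    unfolding t_def using ST by (metis card_mono finite_atLeastAtMost finite_subset)
  have "(\<Sum>j\<in>{1..K}. perm_count {1..K} (window K \<alpha> j) {1..j} S T) * ((K choose \<alpha>) * (\<alpha> choose t))
      = (\<Sum>j\<in>{1..K}. fact K * (card (window K \<alpha> j - {1..j}) choose t))"
    unfolding sum_distrib_right
  proof (rule sum.cong)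
    fix j assume "j \<in> {1..K}"
    then have "window K \<alpha> j \<subseteq> {1..K}" "card (window K \<alpha> j) = \<alpha>"
      using window_subset card_window \<alpha> by auto
    then show "perm_count {1..K} (window K \<alpha> j) {1..j} S T * ((K choose \<alpha>) * (\<alpha> choose t))
        = fact K * (card (window K \<alpha> j - {1..j}) choose t)"
      using perm_count_eq[of "{1..K}" "window K \<alpha> j" S T t "{1..j}"] ST
      unfolding subset_pairs_def t_def by simp
  qed simp
  also have "\<dots> = fact K * ((\<alpha> choose (t + 1)) + (K - \<alpha>) * ((\<alpha> - 1) choose t))"
    unfolding sum_distrib_left[symmetric] sum_choose_card_window_diff[OF \<alpha>] ..
  finally have "real (\<Sum>j\<in>{1..K}. perm_count {1..K} (window K \<alpha> j) {1..j} S T)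
      * (real (K choose \<alpha>) * real (\<alpha> choose t)) = fact K * (real (\<alpha> choose (t + 1))
      + real (K - \<alpha>) * real ((\<alpha> - 1) choose t))"
    by (metis (mono_tags, lifting) of_nat_add of_nat_fact of_nat_mult)
  moreover have "real (K choose \<alpha>) > 0" "real (\<alpha> choose t) > 0"
    using \<alpha> \<open>t \<le> \<alpha>\<close> by auto
  ultimately show ?thesis
    unfolding t_def[symmetric] corner_R_eq_corner_fun[OF \<alpha> \<open>t \<le> \<alpha>\<close>, symmetric] corner_R_def
    by (simp add: field_simps)
qed

lemma sum_product_regroup:
  "(\<Sum>x\<in>(A \<times> C) \<times> D. h x) = (\<Sum>f\<in>A. \<Sum>b\<in>D. \<Sum>s\<in>C. h ((f, s), b))"
proof -
  have "(\<Sum>x\<in>(A \<times> C) \<times> D. h x) = (\<Sum>f\<in>A. \<Sum>s\<in>C. \<Sum>b\<in>D. h ((f, s), b))"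
    by (simp only: sum.cartesian_product')
  also have "\<dots> = (\<Sum>f\<in>A. \<Sum>b\<in>D. \<Sum>s\<in>C. h ((f, s), b))"
    by (rule sum.cong[OF refl], rule sum.swap)
  finally show ?thesis .
qed

lemma sum_chain_sets_eq_perm_count:
  fixes \<tau> :: "file_idx \<times> nat \<Rightarrow> nat set"
  assumes C: "C \<subseteq> {1..K}" "card C = \<alpha>" and g: "g \<in> {1..F}"
  shows "(\<Sum>\<pi>\<in>{\<pi>. \<pi> permutes {1..K}}. \<Sum>c<F. card {b. b < B \<and> \<tau> ((shift F c g, \<pi> ` C), b) \<inter> \<pi> ` P = {}})
    = (\<Sum>x\<in>files K \<alpha> F \<times> {..<B}. perm_count {1..K} C P (snd (fst x)) (\<tau> x))"
proof -
  let ?Perms = "{\<pi>. \<pi> permutes {1..K}}"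
  let ?Q = "\<lambda>f \<pi> b. \<tau> ((f, \<pi> ` C), b) \<inter> \<pi> ` P = {}"
  have fin: "finite ?Perms"
    by (simp add: finite_permutations)
  have "(\<Sum>\<pi>\<in>?Perms. \<Sum>c<F. card {b. b < B \<and> ?Q (shift F c g) \<pi> b})
      = (\<Sum>\<pi>\<in>?Perms. \<Sum>f\<in>{1..F}. card {b. b < B \<and> ?Q f \<pi> b})"
    by (rule sum.cong[OF refl], rule sum.reindex_bij_betw[OF bij_betw_shift[OF g]])
  also have "\<dots> = (\<Sum>f\<in>{1..F}. \<Sum>\<pi>\<in>?Perms. card {b\<in>{..<B}. ?Q f \<pi> b})"
    by (subst sum.swap) simp
  also have "\<dots> = (\<Sum>f\<in>{1..F}. \<Sum>b<B. card {\<pi>\<in>?Perms. ?Q f \<pi> b})"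
    by (rule sum.cong[OF refl], rule sum_card_swap[OF fin]) simp
  also have "\<dots> = (\<Sum>f\<in>{1..F}. \<Sum>b<B. \<Sum>S\<in>{S. S \<subseteq> {1..K} \<and> card S = \<alpha>}.
      perm_count {1..K} C P S (\<tau> ((f, S), b)))"
    using sum_perm_count_classes[of "{1..K}" C P] C by simp
  also have "\<dots> = (\<Sum>x\<in>files K \<alpha> F \<times> {..<B}. perm_count {1..K} C P (snd (fst x)) (\<tau> x))"
    unfolding files_eq sum_product_regroup by simp
  finally show ?thesis .
qed

lemma sum_card_cachers_le:
  fixes M :: real
  assumes placement: "\<forall>k\<in>users K. us_placement K \<alpha> F B M k (Z k)"
  shows "(\<Sum>x\<in>files K \<alpha> F \<times> {..<B}. real (card (cachers Z K x))) \<le> real K * M * real B"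
proof -
  let ?X = "files K \<alpha> F \<times> {..<B}"
  have Z_sub: "Z k \<subseteq> ?X" if "k \<in> {1..K}" for k
    using placement that unfolding us_placement_def users_def FDS_def by auto
  have "(\<Sum>x\<in>?X. card (cachers Z K x)) = (\<Sum>k\<in>{1..K}. card {x\<in>?X. x \<in> Z k})"
    unfolding cachers_def using finite_files by (intro sum_card_swap) auto
  also have "\<dots> = (\<Sum>k\<in>{1..K}. card (Z k))"
    using Z_sub by (intro sum.cong refl arg_cong[where f = card]) auto
  finally have "(\<Sum>x\<in>?X. real (card (cachers Z K x))) = (\<Sum>k\<in>{1..K}. real (card (Z k)))"
    by (metis of_nat_sum)
  also have "\<dots> \<le> (\<Sum>k\<in>{1..K}. M * real B)"
    using placement by (intro sum_mono) (auto simp: us_placement_def users_def)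
  finally show ?thesis
    by simp
qed

lemma cachers_subset_class:
  assumes "\<forall>k\<in>users K. us_placement K \<alpha> F B M k (Z k)"
  shows "cachers Z K ((f, S), b) \<subseteq> S"
proof
  fix k assume "k \<in> cachers Z K ((f, S), b)"
  then have "k \<in> users K" "((f, S), b) \<in> Z k"
    unfolding cachers_def users_def by auto
  then show "k \<in> S"
    using assms unfolding us_placement_def FDS_def by fastforce
qed

lemma sum_chain_counts_eq:
  fixes Z :: "nat \<Rightarrow> (file_idx \<times> nat) set"
  assumes \<alpha>: "1 \<le> \<alpha>" "\<alpha> \<le> K" and F: "F \<ge> 1" "num_files K \<alpha> F \<ge> K"
    and selfish: "\<And>f S b. cachers Z K ((f, S), b) \<subseteq> S"
  shows "real (\<Sum>\<pi>\<in>{\<pi>. \<pi> permutes {1..K}}. \<Sum>c<F. \<Sum>j\<in>{1..K}.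
      card {b. b < B \<and> cachers Z K (chain_file K \<alpha> F \<pi> c j, b) \<inter> \<pi> ` {1..j} = {}})
    = fact K / real (K choose \<alpha>) * (\<Sum>x\<in>files K \<alpha> F \<times> {..<B}. corner_fun K \<alpha> (card (cachers Z K x)))"
proof -
  let ?Perms = "{\<pi>. \<pi> permutes {1..K}}" and ?X = "files K \<alpha> F \<times> {..<B}"
  let ?chain = "\<lambda>\<pi> c j. card {b. b < B \<and> cachers Z K (chain_file K \<alpha> F \<pi> c j, b) \<inter> \<pi> ` {1..j} = {}}"
  let ?count = "\<lambda>j x. perm_count {1..K} (window K \<alpha> j) {1..j} (snd (fst x)) (cachers Z K x)"
  have "(\<Sum>\<pi>\<in>?Perms. \<Sum>c<F. \<Sum>j\<in>{1..K}. ?chain \<pi> c j) = (\<Sum>\<pi>\<in>?Perms. \<Sum>j\<in>{1..K}. \<Sum>c<F. ?chain \<pi> c j)"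
    by (rule sum.cong[OF refl], rule sum.swap)
  also have "\<dots> = (\<Sum>j\<in>{1..K}. \<Sum>\<pi>\<in>?Perms. \<Sum>c<F. ?chain \<pi> c j)"
    by (rule sum.swap)
  also have "\<dots> = (\<Sum>j\<in>{1..K}. \<Sum>x\<in>?X. ?count j x)"
  proof (rule sum.cong[OF refl])
    fix j assume j: "j \<in> {1..K}"
    moreover have "(if \<alpha> = K then j else 1) \<in> {1..F}"
      using j F \<alpha> by (auto simp: num_files_def)
    ultimately show "(\<Sum>\<pi>\<in>?Perms. \<Sum>c<F. ?chain \<pi> c j) = (\<Sum>x\<in>?X. ?count j x)"
      unfolding chain_file_def using \<alpha> window_subset card_window
      by (intro sum_chain_sets_eq_perm_count) auto
  qed
  also have "\<dots> = (\<Sum>x\<in>?X. \<Sum>j\<in>{1..K}. ?count j x)"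
    by (rule sum.swap)
  finally have "real (\<Sum>\<pi>\<in>?Perms. \<Sum>c<F. \<Sum>j\<in>{1..K}. ?chain \<pi> c j) = (\<Sum>x\<in>?X. real (\<Sum>j\<in>{1..K}. ?count j x))"
    by simp
  also have "\<dots> = (\<Sum>x\<in>?X. fact K / real (K choose \<alpha>) * corner_fun K \<alpha> (card (cachers Z K x)))"
  proof (rule sum.cong[OF refl])
    fix x assume "x \<in> ?X"
    then obtain f S b where "x = ((f, S), b)" "S \<subseteq> {1..K}" "card S = \<alpha>"
      unfolding files_def by auto
    then show "real (\<Sum>j\<in>{1..K}. ?count j x) = fact K / real (K choose \<alpha>) * corner_fun K \<alpha> (card (cachers Z K x))"
      using sum_perm_count_windows[OF \<alpha> selfish] by simp
  qed
  finally show ?thesis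
    by (simp only: sum_distrib_left)
qed

lemma sum_corner_fun_cachers_le:
  fixes Z :: "nat \<Rightarrow> (file_idx \<times> nat) set" and M R :: real
  assumes \<alpha>: "1 \<le> \<alpha>" "\<alpha> \<le> K" and F: "F \<ge> 1" "num_files K \<alpha> F \<ge> K"
    and placement: "\<forall>k\<in>users K. us_placement K \<alpha> F B M k (Z k)"
    and code: "\<And>d. d \<in> demands K \<alpha> F \<Longrightarrow>
      \<exists>(enc :: library \<Rightarrow> bool list) (dec :: nat \<Rightarrow> bool list \<Rightarrow> cache_content \<Rightarrow> nat \<Rightarrow> bool).
        \<forall>W \<in> libraries K \<alpha> F B. real (length (enc W)) \<le> R * real B \<and>
          (\<forall>k \<in> users K. \<forall>b < B. dec k (enc W) (cache_of (Z k) W) b = W (d k) b)"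
  shows "(\<Sum>x\<in>files K \<alpha> F \<times> {..<B}. corner_fun K \<alpha> (card (cachers Z K x)))
    \<le> real (num_files K \<alpha> F) * R * real B"
proof -
  let ?Perms = "{\<pi>. \<pi> permutes {1..K}}"
  let ?chain = "\<lambda>\<pi> c j. card {b. b < B \<and> cachers Z K (chain_file K \<alpha> F \<pi> c j, b) \<inter> \<pi> ` {1..j} = {}}"
  let ?w = "fact K / real (K choose \<alpha>)"
  have C: "real (K choose \<alpha>) > 0"
    using \<alpha>(2) by simp
  have "?w * (\<Sum>x\<in>files K \<alpha> F \<times> {..<B}. corner_fun K \<alpha> (card (cachers Z K x)))
      = (\<Sum>\<pi>\<in>?Perms. \<Sum>c<F. real (\<Sum>j\<in>{1..K}. ?chain \<pi> c j))"
    using sum_chain_counts_eq[OF \<alpha> F cachers_subset_class[OF placement]] by simp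
  also have "\<dots> \<le> (\<Sum>\<pi>\<in>?Perms. \<Sum>c<F. R * real B)"
  proof (intro sum_mono)
    fix \<pi> c assume "\<pi> \<in> ?Perms"
    then show "real (\<Sum>j\<in>{1..K}. ?chain \<pi> c j) \<le> R * real B"
      using chain_bound[OF \<alpha> F _ code] by simp
  qed
  also have "\<dots> = fact K * real F * (R * real B)"
    by (simp add: card_permutations)
  also have "\<dots> = ?w * (real (num_files K \<alpha> F) * R * real B)"
    using C unfolding num_files_def of_nat_mult by (simp add: field_simps)
  finally show ?thesis
    by (rule mult_left_le_imp_le) (use C in simp)
qed

lemma R_LB_le_of_achievable:
  assumes \<alpha>: "1 \<le> \<alpha>" "\<alpha> \<le> K" and F: "F \<ge> 1" "num_files K \<alpha> F \<ge> K"
    and "achievable_us K \<alpha> F M R"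
  shows "R_LB K \<alpha> F M \<le> R"
proof -
  obtain B Z where "B > 0" and placement: "\<forall>k \<in> users K. us_placement K \<alpha> F B M k (Z k)"
    and code: "\<forall>d\<in>demands K \<alpha> F.
      \<exists>(enc :: library \<Rightarrow> bool list) (dec :: nat \<Rightarrow> bool list \<Rightarrow> cache_content \<Rightarrow> nat \<Rightarrow> bool).
        \<forall>W \<in> libraries K \<alpha> F B. real (length (enc W)) \<le> R * real B \<and>
          (\<forall>k \<in> users K. \<forall>b < B. dec k (enc W) (cache_of (Z k) W) b = W (d k) b)"
    using assms(5) unfolding achievable_us_def by blast
  let ?X = "files K \<alpha> F \<times> {..<B}" and ?N = "real (num_files K \<alpha> F)"
  let ?t = "min (\<alpha> - 1) (nat \<lfloor>M * real K / ?N\<rfloor>)"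
  have N: "?N > 0"
    using \<alpha> F by (simp add: num_files_def)
  have card_X: "real (card ?X) = ?N * real B"
    by (simp add: card_cartesian_product card_files)
  have "corner_fun K \<alpha> ?t + (real K * M / ?N - ?t) * (corner_fun K \<alpha> (real ?t + 1) - corner_fun K \<alpha> ?t) \<le> R"
  proof (rule chord_bound_of_sums[where g = "\<lambda>u. corner_fun K \<alpha> (real u)" and \<tau> = "\<lambda>x. card (cachers Z K x)"])
    show "corner_fun K \<alpha> ?t + (real u - ?t) * (corner_fun K \<alpha> (real ?t + 1) - corner_fun K \<alpha> ?t)
        \<le> corner_fun K \<alpha> u" for u
      using \<alpha>(1) by (rule corner_fun_above_chord)
    show "corner_fun K \<alpha> (real ?t + 1) - corner_fun K \<alpha> ?t \<le> 0"
      using \<alpha> by (rule corner_fun_step_nonpos)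
    show "finite ?X" "?X \<noteq> {}"
      using finite_files card_X N \<open>B > 0\<close> by auto
    have "(\<Sum>x\<in>?X. corner_fun K \<alpha> (card (cachers Z K x))) \<le> ?N * R * real B"
      using code by (intro sum_corner_fun_cachers_le[OF \<alpha> F placement]) blast
    then show "(\<Sum>x\<in>?X. corner_fun K \<alpha> (card (cachers Z K x))) \<le> real (card ?X) * R"
      unfolding card_X by (simp add: mult_ac)
    show "(\<Sum>x\<in>?X. real (card (cachers Z K x))) \<le> real (card ?X) * (real K * M / ?N)"
      using sum_card_cachers_le[OF placement] card_X N by (simp add: field_simps)
  qed
  then show ?thesis
    using R_LB_eq_chord[OF \<alpha> F(1), of M] by (simp add: mult.commute)
qed

lemma achievable_us_K:
  fixes M :: real
  assumes "M \<ge> 0"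
  shows "achievable_us K \<alpha> F M (real K)"
  unfolding achievable_us_def
proof (intro exI[of _ "1::nat"] conjI exI[of _ "\<lambda>k. {}"] ballI)
  show "(0::nat) < 1" by simp
  fix k show "us_placement K \<alpha> F 1 M k {}"
    unfolding us_placement_def using assms by simp
next
  fix d assume "d \<in> demands K \<alpha> F"
  let ?enc = "\<lambda>W :: library. map (\<lambda>i. W (d (Suc i)) 0) [0..<K]"
  show "\<exists>(enc :: library \<Rightarrow> bool list) (dec :: nat \<Rightarrow> bool list \<Rightarrow> cache_content \<Rightarrow> nat \<Rightarrow> bool).
      \<forall>W \<in> libraries K \<alpha> F 1. real (length (enc W)) \<le> real K * real 1 \<and>
        (\<forall>k \<in> users K. \<forall>b < 1. dec k (enc W) (cache_of {} W) b = W (d k) b)"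
  proof (intro exI[of _ ?enc] exI[of _ "\<lambda>k msg cache b. msg ! (k - 1)"] ballI conjI allI impI)
    fix W :: library and k b assume "k \<in> users K" "b < (1::nat)"
    moreover from this have "k - 1 < K" "Suc (k - 1) = k"
      by (auto simp: users_def)
    ultimately show "?enc W ! (k - 1) = W (d k) b"
      by simp
  qed simp
qed

theorem theorem1:
  fixes K \<alpha> F :: nat
  assumes "K \<ge> 1" and "1 \<le> \<alpha>" and "\<alpha> \<le> K" and "F \<ge> 1"
    and "num_files K \<alpha> F \<ge> K"
  shows "(\<forall>M::real. 0 \<le> M \<and> M \<le> real \<alpha> * real (num_files K \<alpha> F) / real K
            \<longrightarrow> R_LB K \<alpha> F M \<le> R_opt_us K \<alpha> F M)
      \<and> (\<forall>t \<le> \<alpha>. let \<gamma> = real t / real K; \<gamma>\<^sub>\<alpha> = real K * \<gamma> / real \<alpha> in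
            R_LB K \<alpha> F (corner_M K \<alpha> F t) = corner_R K \<alpha> t
          \<and> corner_R K \<alpha> t
              = real K * (1 - \<gamma>\<^sub>\<alpha>) / (real K * \<gamma> + 1) * ((real K - real \<alpha>) * \<gamma> + 1))"
proof (intro conjI allI impI)
  fix M :: real assume "0 \<le> M \<and> M \<le> real \<alpha> * real (num_files K \<alpha> F) / real K"
  then have "achievable_us K \<alpha> F M (real K)"
    by (simp add: achievable_us_K)
  then show "R_LB K \<alpha> F M \<le> R_opt_us K \<alpha> F M"
    unfolding R_opt_us_def using R_LB_le_of_achievable[OF assms(2-5)]
    by (intro cInf_greatest) auto
next
  fix t assume "t \<le> \<alpha>"
  then show "let \<gamma> = real t / real K; \<gamma>\<^sub>\<alpha> = real K * \<gamma> / real \<alpha> in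
      R_LB K \<alpha> F (corner_M K \<alpha> F t) = corner_R K \<alpha> t
      \<and> corner_R K \<alpha> t = real K * (1 - \<gamma>\<^sub>\<alpha>) / (real K * \<gamma> + 1) * ((real K - real \<alpha>) * \<gamma> + 1)"
    using R_LB_corner_M[OF assms(2-4)] corner_R_closed_form[OF assms(2,3)] by (simp add: Let_def)
qed

end
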